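(* Let $L$ be a finite-dimensional Lie algebra over a field $F$ which is not two-generated. Then for each maximal subalgebra $M$ of $L$ and each non-zero element $x\in M$ there exists a maximal subalgebra $S$ of $L$ with $S\neq M$ and $x\in S$. If moreover $F$ is infinite, then each element of $L$ lies in infinitely many maximal subalgebras of $L$.
   Context: A Lie algebra is two-generated if it is generated as a Lie algebra by two of its elements. *)

theory Defs
  imports Complex_Main
begin

definition lie_algebra ::
  "('f::field \<Rightarrow> 'v::ab_group_add \<Rightarrow> 'v) \<Rightarrow> ('v \<Rightarrow> 'v \<Rightarrow> 'v) \<Rightarrow> bool" where
  "lie_algebra scale br \<longleftrightarrow>
     vector_space scale \<and>
     (\<forall>x y z. br (x + y) z = br x z + br y z) \<and>
     (\<forall>x y z. br x (y + z) = br x y + br x z) \<and>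
     (\<forall>a x y. br (scale a x) y = scale a (br x y)) \<and>
     (\<forall>a x y. br x (scale a y) = scale a (br x y)) \<and>
     (\<forall>x. br x x = 0) \<and>
     (\<forall>x y z. br x (br y z) + br y (br z x) + br z (br x y) = 0)"

definition finite_dim :: "('f::field \<Rightarrow> 'v::ab_group_add \<Rightarrow> 'v) \<Rightarrow> bool" where
  "finite_dim scale \<longleftrightarrow> (\<exists>B. finite B \<and> module.span scale B = UNIV)"

definition lie_subalgebra ::
  "('f::field \<Rightarrow> 'v::ab_group_add \<Rightarrow> 'v) \<Rightarrow> ('v \<Rightarrow> 'v \<Rightarrow> 'v) \<Rightarrow> 'v set \<Rightarrow> bool" where
  "lie_subalgebra scale br S \<longleftrightarrow> module.subspace scale S \<and> (\<forall>x\<in>S. \<forall>y\<in>S. br x y \<in> S)"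

definition lie_generated ::
  "('f::field \<Rightarrow> 'v::ab_group_add \<Rightarrow> 'v) \<Rightarrow> ('v \<Rightarrow> 'v \<Rightarrow> 'v) \<Rightarrow> 'v set \<Rightarrow> 'v set" where
  "lie_generated scale br X = \<Inter>{S. lie_subalgebra scale br S \<and> X \<subseteq> S}"

definition two_generated ::
  "('f::field \<Rightarrow> 'v::ab_group_add \<Rightarrow> 'v) \<Rightarrow> ('v \<Rightarrow> 'v \<Rightarrow> 'v) \<Rightarrow> bool" where
  "two_generated scale br \<longleftrightarrow> (\<exists>a b. lie_generated scale br {a, b} = UNIV)"

definition maximal_subalgebra ::
  "('f::field \<Rightarrow> 'v::ab_group_add \<Rightarrow> 'v) \<Rightarrow> ('v \<Rightarrow> 'v \<Rightarrow> 'v) \<Rightarrow> 'v set \<Rightarrow> bool" where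
  "maximal_subalgebra scale br M \<longleftrightarrow>
     lie_subalgebra scale br M \<and> M \<noteq> UNIV \<and>
     (\<forall>S. lie_subalgebra scale br S \<and> M \<subseteq> S \<longrightarrow> S = M \<or> S = UNIV)"

end

theory Submission
  imports Defs
begin

text \<open>Any two elements of a Lie algebra that is not two-generated generate a proper subalgebra,
  which in finite dimension lies in a maximal one. Given a maximal \<open>M \<ni> x\<close>, pairing \<open>x\<close>
  with some \<open>y \<notin> M\<close> yields a second maximal subalgebra through \<open>x\<close>. Pairing \<open>x\<close> with every
  \<open>y\<close> shows that the maximal subalgebras through \<open>x\<close> cover \<open>L\<close>; over an infinite field a
  vector space is never a finite union of proper subspaces, so there are infinitely many.\<close>

context vector_space
begin

lemma finite_line_inter_subspace:
  assumes T: "subspace T" and u: "u \<notin> T"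
  shows "finite {a. v + scale a u \<in> T}"
proof -
  have "a = b" if a: "v + scale a u \<in> T" and b: "v + scale b u \<in> T" for a b
  proof (rule ccontr)
    assume "a \<noteq> b"
    have "scale (a - b) u \<in> T"
      using subspace_diff[OF T a b] by (simp add: scale_left_diff_distrib)
    hence "scale (inverse (a - b)) (scale (a - b) u) \<in> T"
      using subspace_scale[OF T] by blast
    with \<open>a \<noteq> b\<close> u show False by simp
  qed
  thus ?thesis
    by (cases "{a. v + scale a u \<in> T} = {}") (auto intro: finite_subset[of _ "{_}"])
qed

text \<open>Take \<open>u \<in> S\<close> outside the other subspaces and \<open>v \<notin> S\<close>: the line \<open>v + F u\<close> avoids
  \<open>S\<close> and meets each other subspace at most once, so it cannot be covered.\<close>
lemma finite_Union_proper_subspaces_neq_UNIV: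
  assumes inf: "infinite (UNIV :: 'a set)"
    and "finite F" and "\<forall>S\<in>F. subspace S \<and> S \<noteq> UNIV"
  shows "\<Union>F \<noteq> UNIV"
  using assms(2,3)
proof (induction F rule: finite_induct)
  case empty
  show ?case by simp
next
  case (insert S G)
  show ?case
  proof
    assume cover: "\<Union>(insert S G) = UNIV"
    have S: "subspace S" "S \<noteq> UNIV" and G: "\<forall>T\<in>G. subspace T"
      using insert.prems by auto
    obtain u where u: "u \<notin> \<Union>G" using insert.IH insert.prems by auto
    with cover have "u \<in> S" by auto
    obtain v where v: "v \<notin> S" using S(2) by auto
    have "v + scale a u \<notin> S" for a
    proof
      assume "v + scale a u \<in> S"
      hence "v + scale a u - scale a u \<in> S"
        using subspace_diff[OF S(1)] subspace_scale[OF S(1) \<open>u \<in> S\<close>] by blast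
      with v show False by simp
    qed
    with cover have "(UNIV :: 'a set) = (\<Union>T\<in>G. {a. v + scale a u \<in> T})" by blast
    moreover have "finite (\<Union>T\<in>G. {a. v + scale a u \<in> T})"
      using insert.hyps(1) G u finite_line_inter_subspace by auto
    ultimately show False using inf by simp
  qed
qed

end

lemma finite_dim_imp_finite_dimensional_vector_space:
  assumes "vector_space scale" "finite_dim scale"
  shows "\<exists>B. finite_dimensional_vector_space scale B"
proof -
  interpret vector_space scale by fact
  obtain B where B: "finite B" "span B = UNIV" using assms(2) unfolding finite_dim_def by auto
  obtain C where C: "C \<subseteq> B" "independent C" "B \<subseteq> span C"
    using maximal_independent_subset[of B] by blast
  have "span C = UNIV" using C B by (metis span_mono span_span top.extremum_uniqueI)
  hence "finite_dimensional_vector_space scale C"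
    using C B by unfold_locales (auto intro: finite_subset)
  thus ?thesis by blast
qed

lemma lie_subalgebra_lie_generated:
  assumes "vector_space scale"
  shows "lie_subalgebra scale br (lie_generated scale br X)"
proof -
  interpret vector_space scale by fact
  have "subspace (lie_generated scale br X)"
    unfolding lie_generated_def lie_subalgebra_def by (rule subspace_Inter) auto
  thus ?thesis unfolding lie_subalgebra_def lie_generated_def by blast
qed

lemma lie_generated_superset: "X \<subseteq> lie_generated scale br X"
  unfolding lie_generated_def by blast

text \<open>A proper subalgebra of maximal dimension among those containing \<open>A\<close> is maximal.\<close>
lemma (in finite_dimensional_vector_space) proper_lie_subalgebra_in_maximal:
  assumes A: "lie_subalgebra scale br A" "A \<noteq> UNIV"
  shows "\<exists>M. maximal_subalgebra scale br M \<and> A \<subseteq> M"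
proof -
  let ?D = "{dim S | S. lie_subalgebra scale br S \<and> A \<subseteq> S \<and> S \<noteq> UNIV}"
  have fin: "finite ?D"
    by (rule finite_subset[of _ "{..dimension}"]) (auto simp: dim_subset_UNIV)
  have "dim A \<in> ?D" using A by blast
  hence "Max ?D \<in> ?D" using fin by (intro Max_in) auto
  then obtain S where S: "lie_subalgebra scale br S" "A \<subseteq> S" "S \<noteq> UNIV" "dim S = Max ?D"
    by force
  have "T = S" if T: "lie_subalgebra scale br T" "S \<subseteq> T" "T \<noteq> UNIV" for T
  proof -
    have "dim T \<in> ?D" using T S by blast
    hence "dim T \<le> dim S" using fin S(4) by simp
    thus "T = S" using T S(1) subspace_dim_equal unfolding lie_subalgebra_def by blast
  qed
  hence "maximal_subalgebra scale br S"
    unfolding maximal_subalgebra_def using S by blast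
  thus ?thesis using S by blast
qed

lemma not_two_generated_imp_pair_in_maximal_subalgebra:
  assumes "vector_space scale" "finite_dim scale" "\<not> two_generated scale br"
  shows "\<exists>S. maximal_subalgebra scale br S \<and> x \<in> S \<and> y \<in> S"
proof -
  obtain B where "finite_dimensional_vector_space scale B"
    using finite_dim_imp_finite_dimensional_vector_space assms(1,2) by blast
  moreover have "lie_generated scale br {x, y} \<noteq> UNIV"
    using assms(3) unfolding two_generated_def by blast
  ultimately obtain S where "maximal_subalgebra scale br S" "lie_generated scale br {x, y} \<subseteq> S"
    using finite_dimensional_vector_space.proper_lie_subalgebra_in_maximal
      lie_subalgebra_lie_generated[OF assms(1)] by blast
  thus ?thesis using lie_generated_superset[of "{x, y}"] by blast
qed

theorem lemma4p3:
  fixes scale :: "'f::field \<Rightarrow> 'v::ab_group_add \<Rightarrow> 'v"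
    and br :: "'v \<Rightarrow> 'v \<Rightarrow> 'v"
  assumes "lie_algebra scale br"
    and "finite_dim scale"
    and "\<not> two_generated scale br"
  shows "(\<forall>M x. maximal_subalgebra scale br M \<and> x \<in> M \<and> x \<noteq> 0 \<longrightarrow>
            (\<exists>S. maximal_subalgebra scale br S \<and> S \<noteq> M \<and> x \<in> S))
       \<and> (infinite (UNIV :: 'f set) \<longrightarrow>
            (\<forall>x. infinite {S. maximal_subalgebra scale br S \<and> x \<in> S}))"
proof -
  have vs: "vector_space scale" using assms(1) unfolding lie_algebra_def by blast
  note pair = not_two_generated_imp_pair_in_maximal_subalgebra[OF vs assms(2,3)]
  have "\<exists>S. maximal_subalgebra scale br S \<and> S \<noteq> M \<and> x \<in> S"
    if M: "maximal_subalgebra scale br M" for M x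
  proof -
    obtain y where "y \<notin> M" using M unfolding maximal_subalgebra_def by blast
    thus ?thesis using pair[of x y] by blast
  qed
  moreover have "infinite {S. maximal_subalgebra scale br S \<and> x \<in> S}"
    if inf: "infinite (UNIV :: 'f set)" for x
  proof
    let ?F = "{S. maximal_subalgebra scale br S \<and> x \<in> S}"
    assume "finite ?F"
    moreover have "\<forall>S\<in>?F. module.subspace scale S \<and> S \<noteq> UNIV"
      unfolding maximal_subalgebra_def lie_subalgebra_def by auto
    ultimately have "\<Union>?F \<noteq> UNIV"
      using vector_space.finite_Union_proper_subspaces_neq_UNIV[OF vs inf] by blast
    moreover have "\<Union>?F = UNIV" using pair[of x] by blast
    ultimately show False by simp
  qed
  ultimately show ?thesis by blast
qed

end
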